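(* Consider the $2\times 1$ merge network with parameters $c>0$, $k>1$, $\eta\in(0,\tfrac12)$ and constant downstream queue length $Q\ge 0$: upstream queues $1,2$ have capacities $c_1=c$, $c_2=kc$ and inflows $f_1=\eta c$, $f_2=k\eta c$; the downstream queue has capacity $c_0=(k+1)c$. For weights $\gamma_0,\gamma_1,\gamma_2>0$ and an ordered pair $(u,s)\in\{(1,2),(2,1)\}$ (unsaturated queue $u$, saturated queue $s$) define $$q_{s,act}=\frac{\gamma_0}{\gamma_s}\Big(1-\frac{c_u}{c_s}\Big)Q+\frac{\gamma_u c_u}{\gamma_s c_s}f_u,\qquad \bar q_s=q_{s,act}+f_s-\tfrac12 c_s .$$ Let $\bar q_{s,classical}$ denote $\bar q_s$ for the classical weights $\gamma_0=\gamma_1=\gamma_2=1$, and $\bar q_{s,proposed}$ denote $\bar q_s$ for the proposed weights $\gamma_1=1/c_1$, $\gamma_2=1/c_2$, $\gamma_0=1/c_0$. Then, in regime R1, as $k\to\infty$: (i) for $(u,s)=(1,2)$ (with $Q=Q(k)$ satisfying $Q\ge \frac{k^2-\eta}{k-1}c$ and $Q\ge \frac{k-\eta}{k-1}(k+1)c$, the conditions under which this state exists for both weightings), $\bar q_{s,classical}/\bar q_{s,proposed}\to 1$; (ii) for $(u,s)=(2,1)$ (with $Q$, $c$, $\eta$ fixed), $\bar q_{s,classical}/\bar q_{s,proposed}\sim k$, i.e. $\bar q_{s,classical}/(k\,\bar q_{s,proposed})\to 1$.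
   Context: Model: discrete time $t=0,1,2,\dots$; two upstream queues $q_1(t),q_2(t)\ge 0$ merge into one downstream queue whose length is held constant at $Q$. The priority of upstream queue $i$ is $p_i(t)=(\gamma_i q_i(t)-\gamma_0 Q)c_i$. At each time step exactly one upstream queue is activated, one with maximal priority; the activated queue evolves as $q_i(t+1)=q_i(t)-\min(q_i(t),c_i)+f_i$, the other as $q_j(t+1)=q_j(t)+f_j$. Regime R1 means exactly one upstream queue (denoted $u$) is in the unsaturated regime (its outflow $\min(q_u,c_u)$ is below capacity) while the other (denoted $s$) is saturated (its outflow when activated equals $c_s$). The quantity $\bar q_s$ is the paper's approximation of the average steady-state length of the saturated queue, which measures time spent in the network. The weights $\gamma\equiv 1$ give the classical backpressure algorithm; the weights $\gamma=1/\text{capacity}$ give the proposed re-scaled algorithm. *)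

theory Defs
  imports Complex_Main
begin

text \<open>2x1 merge network: index 0 = downstream queue, 1 and 2 = upstream queues.
  Capacities c_0 = (k+1) c, c_1 = c, c_2 = k c.\<close>
definition cap :: "real \<Rightarrow> real \<Rightarrow> nat \<Rightarrow> real" where
  "cap c k i = (if i = 0 then (k + 1) * c else if i = 1 then c else k * c)"

text \<open>Inflows f_1 = eta c, f_2 = k eta c (only used for i = 1, 2).\<close>
definition inflow :: "real \<Rightarrow> real \<Rightarrow> real \<Rightarrow> nat \<Rightarrow> real" where
  "inflow c k \<eta> i = (if i = 1 then \<eta> * c else k * \<eta> * c)"

definition classical_w :: "nat \<Rightarrow> real" where
  "classical_w i = 1"

definition proposed_w :: "real \<Rightarrow> real \<Rightarrow> nat \<Rightarrow> real" where
  "proposed_w c k i = 1 / cap c k i"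

definition q_act :: "(nat \<Rightarrow> real) \<Rightarrow> real \<Rightarrow> real \<Rightarrow> real \<Rightarrow> real \<Rightarrow> nat \<Rightarrow> nat \<Rightarrow> real" where
  "q_act \<gamma> c k \<eta> Q u s =
     \<gamma> 0 / \<gamma> s * (1 - cap c k u / cap c k s) * Q
     + \<gamma> u * cap c k u / (\<gamma> s * cap c k s) * inflow c k \<eta> u"

definition q_bar :: "(nat \<Rightarrow> real) \<Rightarrow> real \<Rightarrow> real \<Rightarrow> real \<Rightarrow> real \<Rightarrow> nat \<Rightarrow> nat \<Rightarrow> real" where
  "q_bar \<gamma> c k \<eta> Q u s = q_act \<gamma> c k \<eta> Q u s + inflow c k \<eta> s - cap c k s / 2"

end

theory Submission
  imports Defs "HOL-Real_Asymp.Real_Asymp"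
begin

text \<open>For (u,s) = (1,2) the Q-terms are (1 - 1/k) Q for the classical and (k - 1)/(k + 1) Q for the
  proposed weights, which differ by a relative O(1/k); the lower bound on Q keeps the proposed
  q_2 of order k, so the remaining terms only perturb the ratio by O(1/k) as well: it lies
  between 1 and 1 + 2/k. For (u,s) = (2,1) with Q fixed, the classical q_1 grows like
  k^2 \<eta> c and the proposed one like k \<eta> c.\<close>

lemma q_bar_classical_1_2:
  assumes "k > 0" and "c > 0"
  shows "q_bar classical_w c k \<eta> Q 1 2 = (1 - 1/k) * Q + \<eta> * c / k + k * \<eta> * c - k * c / 2"
  using assms by (simp add: q_bar_def q_act_def classical_w_def cap_def inflow_def field_simps)

lemma q_bar_proposed_1_2:
  assumes "k > 0" and "c > 0"
  shows "q_bar (proposed_w c k) c k \<eta> Q 1 2 = (k - 1) / (k + 1) * Q + \<eta> * c + k * \<eta> * c - k * c / 2"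
proof -
  have "c * k + c * (k * k) > 0"
    using assms by (simp add: add_pos_pos)
  then show ?thesis
    using assms by (simp add: q_bar_def q_act_def proposed_w_def cap_def inflow_def field_simps)
qed

lemma q_bar_classical_2_1:
  assumes "k > 0" and "c > 0"
  shows "q_bar classical_w c k \<eta> Q 2 1 = (1 - k) * Q + k\<^sup>2 * \<eta> * c + \<eta> * c - c / 2"
  using assms
  by (simp add: q_bar_def q_act_def classical_w_def cap_def inflow_def field_simps power2_eq_square)

lemma q_bar_proposed_2_1:
  assumes "k > 0" and "c > 0"
  shows "q_bar (proposed_w c k) c k \<eta> Q 2 1 = (1 - k) / (k + 1) * Q + k * \<eta> * c + \<eta> * c - c / 2"
  using assms mult_pos_pos[of c "1 + k"]
  by (simp add: q_bar_def q_act_def proposed_w_def cap_def inflow_def field_simps)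

lemma q_bar_ratio_1_2_bounds:
  fixes c \<eta> k Q :: real
  assumes c: "c > 0" and \<eta>: "0 < \<eta>" "\<eta> \<le> 1" and k: "k > 1"
    and Q: "Q \<ge> (k - \<eta>) / (k - 1) * (k + 1) * c"
  defines "r \<equiv> q_bar classical_w c k \<eta> Q 1 2 / q_bar (proposed_w c k) c k \<eta> Q 1 2"
  shows "1 \<le> r \<and> r \<le> 1 + 2 / k"
proof -
  define x where "x = (k - 1) / (k + 1) * Q"
  define A where "A = q_bar classical_w c k \<eta> Q 1 2"
  define B where "B = q_bar (proposed_w c k) c k \<eta> Q 1 2"
  have "x \<ge> (k - 1) / (k + 1) * ((k - \<eta>) / (k - 1) * (k + 1) * c)"
    unfolding x_def using Q k by (intro mult_left_mono) auto
  also have "(k - 1) / (k + 1) * ((k - \<eta>) / (k - 1) * (k + 1) * c) = (k - \<eta>) * c"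
    using k by simp
  finally have x_ge: "(k - \<eta>) * c \<le> x" .
  have B_eq: "B = x + \<eta> * c + k * \<eta> * c - k * c / 2"
    using k c unfolding B_def x_def by (subst q_bar_proposed_1_2) auto
  have "A = (1 - 1/k) * Q + \<eta> * c / k + k * \<eta> * c - k * c / 2"
    using k c unfolding A_def by (subst q_bar_classical_1_2) auto
  also have "(1 - 1/k) * Q = x + x / k"
    using k unfolding x_def by (simp add: divide_simps) (simp add: algebra_simps)
  finally have A_eq: "A = B + (x - (k - 1) * \<eta> * c) / k"
    using k unfolding B_eq by (simp add: field_simps)
  have "(k - \<eta>) * c \<ge> (k - 1) * \<eta> * c"
    using c \<eta> k mult_right_mono[of \<eta> 1 "k * c"] by (simp add: algebra_simps)
  then have A_ge: "A \<ge> B"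
    unfolding A_eq using x_ge k by simp
  have "0 < \<eta> * c" "0 < k * \<eta> * c"
    using c \<eta> k by simp_all
  moreover have "k * c - \<eta> * c \<le> x"
    using x_ge by (simp add: algebra_simps)
  ultimately have x_le: "x \<le> 2 * B"
    unfolding B_eq by (simp add: algebra_simps)
  have "(k - \<eta>) * c > 0"
    using c \<eta> k by simp
  with x_ge x_le have B_pos: "B > 0"
    by linarith
  have "A \<le> B + x / k"
    unfolding A_eq using c \<eta> k by (simp add: divide_right_mono)
  also have "\<dots> \<le> B + 2 * B / k"
    using x_le k by (simp add: divide_right_mono)
  finally have "A \<le> B * (1 + 2 / k)"
    by (simp add: algebra_simps)
  then show ?thesis
    unfolding r_def A_def[symmetric] B_def[symmetric] using A_ge B_pos
    by (simp add: pos_le_divide_eq pos_divide_le_eq mult.commute)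
qed

lemma q_bar_ratio_1_2_tendsto:
  fixes c \<eta> :: real and Q :: "real \<Rightarrow> real"
  assumes c: "c > 0" and \<eta>: "0 < \<eta>" "\<eta> \<le> 1"
    and Q: "\<forall>k>1. Q k \<ge> (k - \<eta>) / (k - 1) * (k + 1) * c"
  shows "((\<lambda>k. q_bar classical_w c k \<eta> (Q k) 1 2 / q_bar (proposed_w c k) c k \<eta> (Q k) 1 2)
            \<longlongrightarrow> 1) at_top"
proof -
  define r where "r = (\<lambda>k. q_bar classical_w c k \<eta> (Q k) 1 2 / q_bar (proposed_w c k) c k \<eta> (Q k) 1 2)"
  have bounds: "\<forall>\<^sub>F k in at_top. 1 \<le> r k \<and> r k \<le> 1 + 2 / k"
    using eventually_gt_at_top[of 1]
    by eventually_elim (use q_bar_ratio_1_2_bounds c \<eta> Q in \<open>auto simp: r_def\<close>)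
  have "((\<lambda>k::real. 1 + 2 / k) \<longlongrightarrow> 1) at_top"
    by real_asymp
  with bounds have "(r \<longlongrightarrow> 1) at_top"
    by (intro tendsto_sandwich[of "\<lambda>_. 1" r _ "\<lambda>k. 1 + 2 / k"]) (auto elim: eventually_mono)
  then show ?thesis
    unfolding r_def .
qed

lemma q_bar_ratio_2_1_asymp:
  fixes c \<eta> Q :: real
  assumes c: "c > 0" and \<eta>: "\<eta> > 0"
  shows "((\<lambda>k. q_bar classical_w c k \<eta> Q 2 1 / (k * q_bar (proposed_w c k) c k \<eta> Q 2 1))
            \<longlongrightarrow> 1) at_top"
proof -
  have "\<forall>\<^sub>F k in at_top.
      ((1 - k) * Q + k\<^sup>2 * \<eta> * c + \<eta> * c - c / 2) / (k * ((1 - k) / (k + 1) * Q + k * \<eta> * c + \<eta> * c - c / 2))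
      = q_bar classical_w c k \<eta> Q 2 1 / (k * q_bar (proposed_w c k) c k \<eta> Q 2 1)"
    using eventually_gt_at_top[of 0]
    by eventually_elim (simp only: q_bar_classical_2_1 q_bar_proposed_2_1 c)
  moreover have "((\<lambda>k. ((1 - k) * Q + k\<^sup>2 * \<eta> * c + \<eta> * c - c / 2)
      / (k * ((1 - k) / (k + 1) * Q + k * \<eta> * c + \<eta> * c - c / 2))) \<longlongrightarrow> 1) at_top"
    using c \<eta> by (real_asymp simp: field_simps)
  ultimately show ?thesis
    by (rule tendsto_cong[THEN iffD1])
qed

theorem theorem2:
  fixes c \<eta> Q0 :: real and Q :: "real \<Rightarrow> real"
  assumes "c > 0" and "0 < \<eta>" and "\<eta> < 1/2" and "Q0 \<ge> 0"
    and "\<forall>k>1. Q k \<ge> 0 \<and> Q k \<ge> (k^2 - \<eta>) / (k - 1) * c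
                 \<and> Q k \<ge> (k - \<eta>) / (k - 1) * (k + 1) * c"
  shows "((\<lambda>k. q_bar classical_w c k \<eta> (Q k) 1 2 / q_bar (proposed_w c k) c k \<eta> (Q k) 1 2)
            \<longlongrightarrow> 1) at_top
       \<and> ((\<lambda>k. q_bar classical_w c k \<eta> Q0 2 1 / (k * q_bar (proposed_w c k) c k \<eta> Q0 2 1))
            \<longlongrightarrow> 1) at_top"
  using q_bar_ratio_1_2_tendsto[of c \<eta> Q] q_bar_ratio_2_1_asymp[of c \<eta> Q0] assms
  by auto

end
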